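(* Let $(\mathfrak g,\mathfrak g^* )$ be a Hom-Lie bialgebra, with Hom-Lie algebras $(\mathfrak{g},[\cdot,\cdot]_{\mathfrak{g}},\phi_{\mathfrak{g}})$ and $(\mathfrak g^*,[\cdot,\cdot]_{\mathfrak g^*},\phi_{\mathfrak g}^* )$. Then $(\mathfrak g\oplus\mathfrak g^*,[\cdot,\cdot]_d,\phi_{\mathfrak g}\oplus\phi_{\mathfrak g}^* )$, where $[x+a,y+b]_d=[x,y]_{\mathfrak g}+\mathrm{ad}^\circ_xb-\mathrm{ad}^\circ_ya+[a,b]_{\mathfrak g^*}+\mathfrak{ad}^\circ_ay-\mathfrak{ad}^\circ_bx$, is a weakly involutive Hom-Lie algebra.
   Context: $\mathfrak g$ is finite-dimensional. A Hom-Lie algebra $(\mathfrak{h},[\cdot,\cdot]_{\mathfrak{h}},\phi_{\mathfrak{h}})$: skew-symmetric bilinear bracket and linear map with $\phi_{\mathfrak h}[x,y]=[\phi_{\mathfrak h}x,\phi_{\mathfrak h}y]$ and $[\phi_{\mathfrak h}(x),[y,z]]+[\phi_{\mathfrak h}(y),[z,x]]+[\phi_{\mathfrak h}(z),[x,y]]=0$; weakly involutive if $[\phi_{\mathfrak h}^2(x),y]=[x,y]$. For $z\in\mathfrak g$, $t\in\mathfrak g\otimes\mathfrak g$: $\mathrm{ad}_zt=(\mathrm{ad}_z\otimes\phi_{\mathfrak g}+\phi_{\mathfrak g}\otimes\mathrm{ad}_z)t$, $\mathrm{ad}_zy=[z,y]_{\mathfrak g}$. A Hom-Lie bialgebra $(\mathfrak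 g,\mathfrak g^* )$ is a pair of weakly involutive Hom-Lie algebras $(\mathfrak{g},[\cdot,\cdot]_{\mathfrak{g}},\phi_{\mathfrak{g}})$ and $(\mathfrak g^*,[\cdot,\cdot]_{\mathfrak g^*},\phi_{\mathfrak g}^* )$ such that $\Delta:\mathfrak g\to\mathfrak g\otimes\mathfrak g$, $\langle\Delta(x),a\otimes b\rangle=\langle x,[a,b]_{\mathfrak g^*}\rangle$, satisfies $\Delta[x,y]_{\mathfrak g}=\mathrm{ad}_{\phi_{\mathfrak g}(x)}\Delta(y)-\mathrm{ad}_{\phi_{\mathfrak g}(y)}\Delta(x)$. $\mathrm{ad}^\circ_xa\in\mathfrak g^*$: $\langle\mathrm{ad}^\circ_xa,y\rangle=-\langle a,[\phi_{\mathfrak g}(x),y]_{\mathfrak g}\rangle$; $\mathfrak{ad}^\circ_ax\in\mathfrak g$: $\langle\mathfrak{ad}^\circ_ax,b\rangle=-\langle x,[\phi_{\mathfrak g}^*(a),b]_{\mathfrak g^*}\rangle$. *)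

theory Defs
  imports Main
begin

text \<open>A finite-dimensional vector space over a field 'k is represented in coordinates
  as 'i \<Rightarrow> 'k with 'i a finite index type. The dual space of 'n \<Rightarrow> 'k is again
  'n \<Rightarrow> 'k via the pairing below; g \<otimes> g is 'n \<Rightarrow> 'n \<Rightarrow> 'k; g \<oplus> g* is ('n + 'n) \<Rightarrow> 'k.\<close>

definition vadd :: "('i \<Rightarrow> 'k::field) \<Rightarrow> ('i \<Rightarrow> 'k) \<Rightarrow> 'i \<Rightarrow> 'k" where
  "vadd x y = (\<lambda>i. x i + y i)"
definition vsub :: "('i \<Rightarrow> 'k::field) \<Rightarrow> ('i \<Rightarrow> 'k) \<Rightarrow> 'i \<Rightarrow> 'k" where
  "vsub x y = (\<lambda>i. x i - y i)"
definition vneg :: "('i \<Rightarrow> 'k::field) \<Rightarrow> 'i \<Rightarrow> 'k" where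
  "vneg x = (\<lambda>i. - x i)"
definition vsmul :: "'k::field \<Rightarrow> ('i \<Rightarrow> 'k) \<Rightarrow> 'i \<Rightarrow> 'k" where
  "vsmul c x = (\<lambda>i. c * x i)"
definition vzero :: "'i \<Rightarrow> 'k::field" where
  "vzero = (\<lambda>i. 0)"

definition linmap :: "(('i \<Rightarrow> 'k::field) \<Rightarrow> ('j \<Rightarrow> 'k)) \<Rightarrow> bool" where
  "linmap f \<longleftrightarrow> (\<forall>x y. f (vadd x y) = vadd (f x) (f y)) \<and> (\<forall>c x. f (vsmul c x) = vsmul c (f x))"

definition bilinear_map :: "(('i \<Rightarrow> 'k::field) \<Rightarrow> ('i \<Rightarrow> 'k) \<Rightarrow> ('i \<Rightarrow> 'k)) \<Rightarrow> bool" where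
  "bilinear_map B \<longleftrightarrow> (\<forall>y. linmap (\<lambda>x. B x y)) \<and> (\<forall>x. linmap (\<lambda>y. B x y))"

definition hom_lie_algebra ::
  "(('i \<Rightarrow> 'k::field) \<Rightarrow> ('i \<Rightarrow> 'k) \<Rightarrow> ('i \<Rightarrow> 'k)) \<Rightarrow> (('i \<Rightarrow> 'k) \<Rightarrow> ('i \<Rightarrow> 'k)) \<Rightarrow> bool" where
  "hom_lie_algebra br phi \<longleftrightarrow>
     bilinear_map br \<and> (\<forall>x y. br x y = vneg (br y x)) \<and> linmap phi \<and>
     (\<forall>x y. phi (br x y) = br (phi x) (phi y)) \<and>
     (\<forall>x y z. vadd (vadd (br (phi x) (br y z)) (br (phi y) (br z x))) (br (phi z) (br x y)) = vzero)"

definition weakly_involutive ::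
  "(('i \<Rightarrow> 'k::field) \<Rightarrow> ('i \<Rightarrow> 'k) \<Rightarrow> ('i \<Rightarrow> 'k)) \<Rightarrow> (('i \<Rightarrow> 'k) \<Rightarrow> ('i \<Rightarrow> 'k)) \<Rightarrow> bool" where
  "weakly_involutive br phi \<longleftrightarrow> (\<forall>x y. br (phi (phi x)) y = br x y)"

definition pairing :: "('n::finite \<Rightarrow> 'k::field) \<Rightarrow> ('n \<Rightarrow> 'k) \<Rightarrow> 'k" where
  "pairing x a = (\<Sum>i\<in>UNIV. x i * a i)"

definition unitv :: "'n \<Rightarrow> 'n \<Rightarrow> 'k::field" where
  "unitv i = (\<lambda>j. if j = i then 1 else 0)"

text \<open>Dual map: pairing (dual_map phi a) x = pairing (phi x) a for linear phi.\<close>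
definition dual_map :: "(('n::finite \<Rightarrow> 'k::field) \<Rightarrow> ('n \<Rightarrow> 'k)) \<Rightarrow> ('n \<Rightarrow> 'k) \<Rightarrow> 'n \<Rightarrow> 'k" where
  "dual_map phi a = (\<lambda>j. \<Sum>i\<in>UNIV. a i * phi (unitv j) i)"

text \<open>Tensors in g \<otimes> g as coefficient matrices; (A \<otimes> B) t.\<close>
definition tadd :: "('n \<Rightarrow> 'n \<Rightarrow> 'k::field) \<Rightarrow> ('n \<Rightarrow> 'n \<Rightarrow> 'k) \<Rightarrow> 'n \<Rightarrow> 'n \<Rightarrow> 'k" where
  "tadd s t = (\<lambda>p q. s p q + t p q)"
definition tsub :: "('n \<Rightarrow> 'n \<Rightarrow> 'k::field) \<Rightarrow> ('n \<Rightarrow> 'n \<Rightarrow> 'k) \<Rightarrow> 'n \<Rightarrow> 'n \<Rightarrow> 'k" where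
  "tsub s t = (\<lambda>p q. s p q - t p q)"

definition tensor_map ::
  "(('n::finite \<Rightarrow> 'k::field) \<Rightarrow> ('n \<Rightarrow> 'k)) \<Rightarrow> (('n \<Rightarrow> 'k) \<Rightarrow> ('n \<Rightarrow> 'k)) \<Rightarrow> ('n \<Rightarrow> 'n \<Rightarrow> 'k) \<Rightarrow> 'n \<Rightarrow> 'n \<Rightarrow> 'k" where
  "tensor_map A B t = (\<lambda>p q. \<Sum>i\<in>UNIV. \<Sum>j\<in>UNIV. t i j * A (unitv i) p * B (unitv j) q)"

definition ad_tensor ::
  "(('n::finite \<Rightarrow> 'k::field) \<Rightarrow> ('n \<Rightarrow> 'k) \<Rightarrow> ('n \<Rightarrow> 'k)) \<Rightarrow> (('n \<Rightarrow> 'k) \<Rightarrow> ('n \<Rightarrow> 'k))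
    \<Rightarrow> ('n \<Rightarrow> 'k) \<Rightarrow> ('n \<Rightarrow> 'n \<Rightarrow> 'k) \<Rightarrow> 'n \<Rightarrow> 'n \<Rightarrow> 'k" where
  "ad_tensor br phi z t = tadd (tensor_map (br z) phi t) (tensor_map phi (br z) t)"

text \<open>Delta: <Delta x, a \<otimes> b> = <x, [a,b]_*>; coefficients w.r.t. the standard basis.\<close>
definition cobracket ::
  "(('n::finite \<Rightarrow> 'k::field) \<Rightarrow> ('n \<Rightarrow> 'k) \<Rightarrow> ('n \<Rightarrow> 'k)) \<Rightarrow> ('n \<Rightarrow> 'k) \<Rightarrow> 'n \<Rightarrow> 'n \<Rightarrow> 'k" where
  "cobracket brd x = (\<lambda>i j. pairing x (brd (unitv i) (unitv j)))"

definition hom_lie_bialgebra ::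
  "(('n::finite \<Rightarrow> 'k::field) \<Rightarrow> ('n \<Rightarrow> 'k) \<Rightarrow> ('n \<Rightarrow> 'k)) \<Rightarrow> (('n \<Rightarrow> 'k) \<Rightarrow> ('n \<Rightarrow> 'k))
    \<Rightarrow> (('n \<Rightarrow> 'k) \<Rightarrow> ('n \<Rightarrow> 'k) \<Rightarrow> ('n \<Rightarrow> 'k)) \<Rightarrow> bool" where
  "hom_lie_bialgebra br phi brd \<longleftrightarrow>
     hom_lie_algebra br phi \<and> weakly_involutive br phi \<and>
     hom_lie_algebra brd (dual_map phi) \<and> weakly_involutive brd (dual_map phi) \<and>
     (\<forall>x y. cobracket brd (br x y) =
        tsub (ad_tensor br phi (phi x) (cobracket brd y)) (ad_tensor br phi (phi y) (cobracket brd x)))"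

text \<open><ad_circ x a, y> = - <a, [phi x, y]>.\<close>
definition ad_circ ::
  "(('n::finite \<Rightarrow> 'k::field) \<Rightarrow> ('n \<Rightarrow> 'k) \<Rightarrow> ('n \<Rightarrow> 'k)) \<Rightarrow> (('n \<Rightarrow> 'k) \<Rightarrow> ('n \<Rightarrow> 'k))
    \<Rightarrow> ('n \<Rightarrow> 'k) \<Rightarrow> ('n \<Rightarrow> 'k) \<Rightarrow> 'n \<Rightarrow> 'k" where
  "ad_circ br phi x a = (\<lambda>j. - pairing (br (phi x) (unitv j)) a)"

text \<open><ad_circ_dual a x, b> = - <x, [phi* a, b]_*>.\<close>
definition ad_circ_dual ::
  "(('n::finite \<Rightarrow> 'k::field) \<Rightarrow> ('n \<Rightarrow> 'k) \<Rightarrow> ('n \<Rightarrow> 'k)) \<Rightarrow> (('n \<Rightarrow> 'k) \<Rightarrow> ('n \<Rightarrow> 'k))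
    \<Rightarrow> ('n \<Rightarrow> 'k) \<Rightarrow> ('n \<Rightarrow> 'k) \<Rightarrow> 'n \<Rightarrow> 'k" where
  "ad_circ_dual brd phi a x = (\<lambda>j. - pairing x (brd (dual_map phi a) (unitv j)))"

definition gpart :: "('n + 'n \<Rightarrow> 'k) \<Rightarrow> 'n \<Rightarrow> 'k" where
  "gpart u = (\<lambda>i. u (Inl i))"
definition dpart :: "('n + 'n \<Rightarrow> 'k) \<Rightarrow> 'n \<Rightarrow> 'k" where
  "dpart u = (\<lambda>i. u (Inr i))"
definition dsum :: "('n \<Rightarrow> 'k) \<Rightarrow> ('n \<Rightarrow> 'k) \<Rightarrow> 'n + 'n \<Rightarrow> 'k" where
  "dsum x a = case_sum x a"

definition double_bracket ::
  "(('n::finite \<Rightarrow> 'k::field) \<Rightarrow> ('n \<Rightarrow> 'k) \<Rightarrow> ('n \<Rightarrow> 'k)) \<Rightarrow> (('n \<Rightarrow> 'k) \<Rightarrow> ('n \<Rightarrow> 'k))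
    \<Rightarrow> (('n \<Rightarrow> 'k) \<Rightarrow> ('n \<Rightarrow> 'k) \<Rightarrow> ('n \<Rightarrow> 'k)) \<Rightarrow> ('n + 'n \<Rightarrow> 'k) \<Rightarrow> ('n + 'n \<Rightarrow> 'k) \<Rightarrow> 'n + 'n \<Rightarrow> 'k" where
  "double_bracket br phi brd u v =
     (let x = gpart u; a = dpart u; y = gpart v; b = dpart v in
      dsum (vsub (vadd (br x y) (ad_circ_dual brd phi a y)) (ad_circ_dual brd phi b x))
           (vadd (vsub (ad_circ br phi x b) (ad_circ br phi y a)) (brd a b)))"

definition double_phi ::
  "(('n::finite \<Rightarrow> 'k::field) \<Rightarrow> ('n \<Rightarrow> 'k)) \<Rightarrow> ('n + 'n \<Rightarrow> 'k) \<Rightarrow> 'n + 'n \<Rightarrow> 'k" where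
  "double_phi phi u = dsum (phi (gpart u)) (dual_map phi (dpart u))"

end

theory Submission
  imports Defs
begin

text \<open>Since
  \<open>ad\<degree>\<close> and \<open>\<aa>\<dd>\<degree>\<close> are defined by transposing brackets along the pairing, multiplicativity
  and weak involutivity of the two factors make them intertwine \<open>\<phi>\<close> with \<open>\<phi>*\<close>, which gives
  multiplicativity and weak involutivity of \<open>\<phi> \<oplus> \<phi>*\<close>. The Hom-Jacobiator is additive in
  each argument and cyclically symmetric, so it suffices to evaluate it on homogeneous triples.
  On triples from \<open>g\<close> alone or \<open>g*\<close> alone it is the Jacobiator of the factor. On a mixed
  triple, test both components against the nondegenerate pairing: one component says that
  \<open>ad\<degree>\<close> (resp. \<open>\<aa>\<dd>\<degree>\<close>) is a representation, which is the Hom-Jacobi identity of \<open>g\<close>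
  (resp. \<open>g*\<close>) transposed, and the other is the compatibility condition on \<open>\<Delta>\<close> paired
  with \<open>a \<otimes> b\<close>.\<close>

lemma vadd_apply [simp]: "vadd x y i = x i + y i" by (simp add: vadd_def)
lemma vsub_apply [simp]: "vsub x y i = x i - y i" by (simp add: vsub_def)
lemma vneg_apply [simp]: "vneg x i = - x i" by (simp add: vneg_def)
lemma vsmul_apply [simp]: "vsmul c x i = c * x i" by (simp add: vsmul_def)
lemma vzero_apply [simp]: "vzero i = 0" by (simp add: vzero_def)

lemma vadd_vzero [simp]: "vadd x vzero = x" "vadd vzero x = x"
  and vsub_vzero [simp]: "vsub x vzero = x" "vsub vzero x = vneg x"
  and vneg_vzero [simp]: "vneg vzero = vzero"
  by (auto simp: fun_eq_iff)

lemma linmap_vadd: "linmap f \<Longrightarrow> f (vadd x y) = vadd (f x) (f y)"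
  by (simp add: linmap_def)

lemma linmap_vsmul: "linmap f \<Longrightarrow> f (vsmul c x) = vsmul c (f x)"
  by (simp add: linmap_def)

lemma vsmul_0_left: "vsmul 0 x = vzero"
  by (simp add: fun_eq_iff)

lemma vneg_eq_vsmul: "vneg x = vsmul (-1) x"
  by (simp add: fun_eq_iff)

lemma vsub_eq_vadd_vneg: "vsub x y = vadd x (vneg y)"
  by (simp add: fun_eq_iff)

lemma linmap_vzero: "linmap f \<Longrightarrow> f vzero = vzero"
  using linmap_vsmul[of f 0 vzero] by (simp add: vsmul_0_left)

lemma linmap_vneg: "linmap f \<Longrightarrow> f (vneg x) = vneg (f x)"
  unfolding vneg_eq_vsmul by (rule linmap_vsmul)

lemma linmap_vsub: "linmap f \<Longrightarrow> f (vsub x y) = vsub (f x) (f y)"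
  unfolding vsub_eq_vadd_vneg by (simp only: linmap_vadd linmap_vneg)

lemma linmap_sum:
  assumes f: "linmap f" and "finite S"
  shows "f (\<lambda>i. \<Sum>j\<in>S. c j * e j i) = (\<lambda>p. \<Sum>j\<in>S. c j * f (e j) p)"
  using \<open>finite S\<close>
proof (induction S rule: finite_induct)
  case empty
  show ?case using linmap_vzero[OF f] by (simp add: vzero_def)
next
  case (insert s S)
  have "(\<lambda>i. \<Sum>j\<in>insert s S. c j * e j i) = vadd (vsmul (c s) (e s)) (\<lambda>i. \<Sum>j\<in>S. c j * e j i)"
    using insert.hyps by (simp add: fun_eq_iff)
  then have "f (\<lambda>i. \<Sum>j\<in>insert s S. c j * e j i)
      = vadd (vsmul (c s) (f (e s))) (f (\<lambda>i. \<Sum>j\<in>S. c j * e j i))"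
    by (simp only: linmap_vadd[OF f] linmap_vsmul[OF f])
  then show ?case
    using insert.hyps by (simp add: insert.IH fun_eq_iff)
qed

lemma vec_eq_sum_unitv: "(x :: 'n::finite \<Rightarrow> 'k::field) = (\<lambda>i. \<Sum>j\<in>UNIV. x j * unitv j i)"
proof
  fix i
  have "\<And>j. x j * unitv j i = (if i = j then x j else 0)" by (simp add: unitv_def)
  then show "x i = (\<Sum>j\<in>UNIV. x j * unitv j i)" by simp
qed

lemma linmap_eq_sum_unitv:
  fixes x :: "'n::finite \<Rightarrow> 'k::field"
  assumes "linmap f"
  shows "f x = (\<lambda>p. \<Sum>j\<in>UNIV. x j * f (unitv j) p)"
  using linmap_sum[OF assms, of UNIV x unitv] vec_eq_sum_unitv[of x] by simp

lemma pairing_commute: "pairing x a = pairing a x"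
  by (simp add: pairing_def mult.commute)

lemma pairing_vadd [simp]:
  "pairing (vadd x y) a = pairing x a + pairing y a"
  "pairing a (vadd x y) = pairing a x + pairing a y"
  by (simp_all add: pairing_def algebra_simps sum.distrib)

lemma pairing_vsub [simp]:
  "pairing (vsub x y) a = pairing x a - pairing y a"
  "pairing a (vsub x y) = pairing a x - pairing a y"
  by (simp_all add: pairing_def algebra_simps sum_subtractf)

lemma pairing_vneg [simp]:
  "pairing (vneg x) a = - pairing x a"
  "pairing a (vneg x) = - pairing a x"
  by (simp_all add: pairing_def sum_negf)

lemma pairing_vsmul [simp]:
  "pairing (vsmul c x) a = c * pairing x a"
  "pairing a (vsmul c x) = c * pairing a x"
  by (simp_all add: pairing_def sum_distrib_left mult_ac)

lemma pairing_vzero [simp]: "pairing vzero a = 0" "pairing a vzero = 0"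
  by (simp_all add: pairing_def)

lemma pairing_unitv: "pairing x (unitv j) = x j"
proof -
  have "\<And>i. x i * unitv j i = (if j = i then x i else 0)" by (simp add: unitv_def)
  then show ?thesis by (simp add: pairing_def)
qed

lemma pairing_ext: "(\<And>a. pairing x a = pairing y a) \<Longrightarrow> x = y"
  by (metis pairing_unitv ext)

lemma pairing_ext_right: "(\<And>y. pairing y a = pairing y b) \<Longrightarrow> a = b"
  by (rule pairing_ext) (metis pairing_commute)

lemma pairing_linmap:
  fixes y :: "'n::finite \<Rightarrow> 'k::field"
  assumes "linmap f"
  shows "pairing (f y) a = (\<Sum>j\<in>UNIV. y j * pairing (f (unitv j)) a)"
proof -
  have "pairing (f y) a = (\<Sum>p\<in>UNIV. \<Sum>j\<in>UNIV. y j * (f (unitv j) p * a p))"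
    by (subst linmap_eq_sum_unitv[OF assms]) (simp add: pairing_def sum_distrib_right mult.assoc)
  also have "\<dots> = (\<Sum>j\<in>UNIV. y j * pairing (f (unitv j)) a)"
    by (subst sum.swap) (simp add: pairing_def sum_distrib_left)
  finally show ?thesis .
qed

lemma pairing_dual_map:
  assumes "linmap f"
  shows "pairing (f x) a = pairing x (dual_map f a)"
  by (subst pairing_linmap[OF assms])
    (simp add: pairing_def dual_map_def sum_distrib_left mult.commute)

lemma linmap_simps:
  assumes "linmap f"
  shows "f (vadd x y) = vadd (f x) (f y)" "f (vsub x y) = vsub (f x) (f y)"
    "f (vneg x) = vneg (f x)" "f (vsmul c x) = vsmul c (f x)" "f vzero = vzero"
  by (rule linmap_vadd[OF assms] linmap_vsub[OF assms] linmap_vneg[OF assms]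
      linmap_vsmul[OF assms] linmap_vzero[OF assms])+

lemma bilinear_map_left: "bilinear_map br \<Longrightarrow> linmap (\<lambda>x. br x y)"
  and bilinear_map_right: "bilinear_map br \<Longrightarrow> linmap (br x)"
  by (simp_all add: bilinear_map_def)

lemma bilinear_map_simps:
  assumes "bilinear_map br"
  shows "br (vadd x x') y = vadd (br x y) (br x' y)" "br x (vadd y y') = vadd (br x y) (br x y')"
    "br (vsub x x') y = vsub (br x y) (br x' y)" "br x (vsub y y') = vsub (br x y) (br x y')"
    "br (vneg x) y = vneg (br x y)" "br x (vneg y) = vneg (br x y)"
    "br (vsmul c x) y = vsmul c (br x y)" "br x (vsmul c y) = vsmul c (br x y)"
    "br vzero y = vzero" "br x vzero = vzero"
  using linmap_simps[OF bilinear_map_left[OF assms]] linmap_simps[OF bilinear_map_right[OF assms]]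
  by auto

definition tensor_pairing :: "('n::finite \<Rightarrow> 'n \<Rightarrow> 'k::field) \<Rightarrow> ('n \<Rightarrow> 'k) \<Rightarrow> ('n \<Rightarrow> 'k) \<Rightarrow> 'k" where
  "tensor_pairing t a b = (\<Sum>p\<in>UNIV. \<Sum>q\<in>UNIV. t p q * a p * b q)"

lemma tensor_pairing_tadd: "tensor_pairing (tadd s t) a b = tensor_pairing s a b + tensor_pairing t a b"
  by (simp add: tensor_pairing_def tadd_def algebra_simps sum.distrib)

lemma tensor_pairing_tsub: "tensor_pairing (tsub s t) a b = tensor_pairing s a b - tensor_pairing t a b"
  by (simp add: tensor_pairing_def tsub_def algebra_simps sum_subtractf)

lemma tensor_pairing_tensor_map:
  "tensor_pairing (tensor_map A B t) a b = tensor_pairing t (dual_map A a) (dual_map B b)"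
proof -
  let ?s = "\<lambda>i j p q. t i j * (a p * A (unitv i) p) * (b q * B (unitv j) q)"
  have "tensor_pairing (tensor_map A B t) a b = (\<Sum>p\<in>UNIV. \<Sum>q\<in>UNIV. \<Sum>i\<in>UNIV. \<Sum>j\<in>UNIV. ?s i j p q)"
    by (simp add: tensor_pairing_def tensor_map_def sum_distrib_left sum_distrib_right mult_ac)
  also have "\<dots> = (\<Sum>p\<in>UNIV. \<Sum>i\<in>UNIV. \<Sum>q\<in>UNIV. \<Sum>j\<in>UNIV. ?s i j p q)"
    by (rule sum.cong[OF refl], rule sum.swap)
  also have "\<dots> = (\<Sum>i\<in>UNIV. \<Sum>p\<in>UNIV. \<Sum>q\<in>UNIV. \<Sum>j\<in>UNIV. ?s i j p q)"
    by (rule sum.swap)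
  also have "\<dots> = (\<Sum>i\<in>UNIV. \<Sum>p\<in>UNIV. \<Sum>j\<in>UNIV. \<Sum>q\<in>UNIV. ?s i j p q)"
    by (rule sum.cong[OF refl], rule sum.cong[OF refl], rule sum.swap)
  also have "\<dots> = (\<Sum>i\<in>UNIV. \<Sum>j\<in>UNIV. \<Sum>p\<in>UNIV. \<Sum>q\<in>UNIV. ?s i j p q)"
    by (rule sum.cong[OF refl], rule sum.swap)
  also have "\<dots> = tensor_pairing t (dual_map A a) (dual_map B b)"
    by (simp add: tensor_pairing_def dual_map_def sum_distrib_left sum_distrib_right mult_ac)
  finally show ?thesis .
qed

lemma tensor_pairing_cobracket:
  assumes "bilinear_map brd"
  shows "tensor_pairing (cobracket brd x) a b = pairing x (brd a b)"
proof -
  have "pairing (brd a b) x = (\<Sum>p\<in>UNIV. a p * pairing (brd (unitv p) b) x)"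
    by (rule pairing_linmap[OF bilinear_map_left[OF assms]])
  also have "\<dots> = (\<Sum>p\<in>UNIV. a p * (\<Sum>q\<in>UNIV. b q * pairing (brd (unitv p) (unitv q)) x))"
    by (simp add: pairing_linmap[OF bilinear_map_right[OF assms], where y = b])
  also have "\<dots> = tensor_pairing (cobracket brd x) a b"
    by (simp add: tensor_pairing_def cobracket_def sum_distrib_left mult_ac pairing_commute[of x])
  finally show ?thesis by (simp add: pairing_commute)
qed

definition hom_jacobiator ::
  "(('i \<Rightarrow> 'k::field) \<Rightarrow> ('i \<Rightarrow> 'k) \<Rightarrow> ('i \<Rightarrow> 'k)) \<Rightarrow> (('i \<Rightarrow> 'k) \<Rightarrow> ('i \<Rightarrow> 'k))
    \<Rightarrow> ('i \<Rightarrow> 'k) \<Rightarrow> ('i \<Rightarrow> 'k) \<Rightarrow> ('i \<Rightarrow> 'k) \<Rightarrow> 'i \<Rightarrow> 'k" where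
  "hom_jacobiator br phi x y z =
     vadd (vadd (br (phi x) (br y z)) (br (phi y) (br z x))) (br (phi z) (br x y))"

lemma hom_lie_algebra_iff_hom_jacobiator:
  "hom_lie_algebra br phi \<longleftrightarrow>
     bilinear_map br \<and> (\<forall>x y. br x y = vneg (br y x)) \<and> linmap phi \<and>
     (\<forall>x y. phi (br x y) = br (phi x) (phi y)) \<and> (\<forall>x y z. hom_jacobiator br phi x y z = vzero)"
  by (simp add: hom_lie_algebra_def hom_jacobiator_def)

lemma hom_jacobiator_cyclic: "hom_jacobiator br phi x y z = hom_jacobiator br phi y z x"
  by (simp add: hom_jacobiator_def fun_eq_iff algebra_simps)

lemma hom_jacobiator_vadd_left:
  assumes "bilinear_map br" and "linmap phi"
  shows "hom_jacobiator br phi (vadd x x') y z = vadd (hom_jacobiator br phi x y z) (hom_jacobiator br phi x' y z)"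
  unfolding hom_jacobiator_def linmap_vadd[OF assms(2)] bilinear_map_simps[OF assms(1)]
  by (simp add: fun_eq_iff algebra_simps)

lemma gpart_dsum [simp]: "gpart (dsum x a) = x"
  and dpart_dsum [simp]: "dpart (dsum x a) = a"
  by (simp_all add: gpart_def dpart_def dsum_def)

lemma dsum_eq_iff: "dsum x a = dsum y b \<longleftrightarrow> x = y \<and> a = b"
  by (metis gpart_dsum dpart_dsum)

lemma dsum_gpart_dpart: "dsum (gpart u) (dpart u) = u"
  by (auto simp: dsum_def gpart_def dpart_def fun_eq_iff split: sum.split)

lemma dsum_vadd [simp]: "vadd (dsum x a) (dsum y b) = dsum (vadd x y) (vadd a b)"
  and dsum_vsub [simp]: "vsub (dsum x a) (dsum y b) = dsum (vsub x y) (vsub a b)"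
  and dsum_vneg [simp]: "vneg (dsum x a) = dsum (vneg x) (vneg a)"
  and dsum_vsmul [simp]: "vsmul c (dsum x a) = dsum (vsmul c x) (vsmul c a)"
  by (auto simp: dsum_def fun_eq_iff split: sum.split)

lemma gpart_vadd [simp]: "gpart (vadd u v) = vadd (gpart u) (gpart v)"
  and dpart_vadd [simp]: "dpart (vadd u v) = vadd (dpart u) (dpart v)"
  and gpart_vsmul [simp]: "gpart (vsmul c u) = vsmul c (gpart u)"
  and dpart_vsmul [simp]: "dpart (vsmul c u) = vsmul c (dpart u)"
  by (simp_all add: gpart_def dpart_def fun_eq_iff)

lemma dsum_vzero: "dsum vzero vzero = vzero"
  by (auto simp: dsum_def fun_eq_iff split: sum.split)

lemma dsum_eq_vzero_iff [simp]: "dsum x a = vzero \<longleftrightarrow> x = vzero \<and> a = vzero"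
  by (metis dsum_vzero dsum_eq_iff)

lemma dsum_decompose: "u = vadd (dsum (gpart u) vzero) (dsum vzero (dpart u))"
  by (simp add: dsum_gpart_dpart)

lemma triadditive_cyclic_dsum_vanishes:
  fixes J :: "('n + 'n \<Rightarrow> 'k::field) \<Rightarrow> ('n + 'n \<Rightarrow> 'k) \<Rightarrow> ('n + 'n \<Rightarrow> 'k) \<Rightarrow> 'm \<Rightarrow> 'k"
  assumes additive: "\<And>u u' v w. J (vadd u u') v w = vadd (J u v w) (J u' v w)"
    and cyclic: "\<And>u v w. J u v w = J v w u"
    and ggg: "\<And>x y z. J (dsum x vzero) (dsum y vzero) (dsum z vzero) = vzero"
    and ggd: "\<And>x y c. J (dsum x vzero) (dsum y vzero) (dsum vzero c) = vzero"
    and gdd: "\<And>x b c. J (dsum x vzero) (dsum vzero b) (dsum vzero c) = vzero"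
    and ddd: "\<And>a b c. J (dsum vzero a) (dsum vzero b) (dsum vzero c) = vzero"
  shows "J u v w = vzero"
proof -
  have additive2: "J u (vadd v v') w = vadd (J u v w) (J u v' w)" for u v v' w
    by (metis additive cyclic)
  have additive3: "J u v (vadd w w') = vadd (J u v w) (J u v w')" for u v w w'
    by (metis additive cyclic)
  have gdg: "J (dsum x vzero) (dsum vzero b) (dsum z vzero) = vzero" for x b z
    by (metis cyclic ggd)
  have dgg: "J (dsum vzero a) (dsum y vzero) (dsum z vzero) = vzero" for a y z
    by (metis cyclic ggd)
  have dgd: "J (dsum vzero a) (dsum y vzero) (dsum vzero c) = vzero" for a y c
    by (metis cyclic gdd)
  have ddg: "J (dsum vzero a) (dsum vzero b) (dsum z vzero) = vzero" for a b z
    by (metis cyclic gdd)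
  show ?thesis
    by (subst dsum_decompose[of u], subst dsum_decompose[of v], subst dsum_decompose[of w])
      (simp only: additive additive2 additive3 ggg ggd gdd ddd gdg dgg dgd ddg vadd_vzero)
qed

locale hom_lie_bialg =
  fixes br :: "('n::finite \<Rightarrow> 'k::field) \<Rightarrow> ('n \<Rightarrow> 'k) \<Rightarrow> ('n \<Rightarrow> 'k)"
    and phi :: "('n \<Rightarrow> 'k) \<Rightarrow> ('n \<Rightarrow> 'k)"
    and brd :: "('n \<Rightarrow> 'k) \<Rightarrow> ('n \<Rightarrow> 'k) \<Rightarrow> ('n \<Rightarrow> 'k)"
  assumes hom_lie_bialgebra: "hom_lie_bialgebra br phi brd"
begin

abbreviation "phis \<equiv> dual_map phi"
abbreviation "adc \<equiv> ad_circ br phi"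
abbreviation "adcd \<equiv> ad_circ_dual brd phi"

lemma bilinear: "bilinear_map br"
  and skew: "br x y = vneg (br y x)"
  and linmap_phi: "linmap phi"
  and multiplicative: "phi (br x y) = br (phi x) (phi y)"
  and jacobi: "hom_jacobiator br phi x y z = vzero"
  and weakly_involutive: "br (phi (phi x)) y = br x y"
  and bilinear_dual: "bilinear_map brd"
  and skew_dual: "brd a b = vneg (brd b a)"
  and linmap_phis: "linmap phis"
  and multiplicative_dual: "phis (brd a b) = brd (phis a) (phis b)"
  and jacobi_dual: "hom_jacobiator brd phis a b c = vzero"
  and weakly_involutive_dual: "brd (phis (phis a)) b = brd a b"
  and compatible: "cobracket brd (br x y) =
        tsub (ad_tensor br phi (phi x) (cobracket brd y)) (ad_tensor br phi (phi y) (cobracket brd x))"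
  using hom_lie_bialgebra
  unfolding hom_lie_bialgebra_def hom_lie_algebra_iff_hom_jacobiator weakly_involutive_def
  by blast+

lemmas br_simps [simp] = bilinear_map_simps[OF bilinear]
lemmas brd_simps [simp] = bilinear_map_simps[OF bilinear_dual]
lemmas phi_simps [simp] = linmap_simps[OF linmap_phi]
lemmas phis_simps [simp] = linmap_simps[OF linmap_phis]

lemma weakly_involutive_right: "br x (phi (phi y)) = br x y"
  by (metis skew weakly_involutive)

lemma weakly_involutive_dual_right: "brd a (phis (phis b)) = brd a b"
  by (metis skew_dual weakly_involutive_dual)

lemma pairing_phi: "pairing (phi x) a = pairing x (phis a)"
  by (rule pairing_dual_map[OF linmap_phi])

lemma pairing_adc: "pairing y (adc x a) = - pairing (br (phi x) y) a"
proof -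
  have "pairing y (adc x a) = (\<Sum>j\<in>UNIV. y j * - pairing (br (phi x) (unitv j)) a)"
    by (simp add: ad_circ_def pairing_def[of y])
  also have "\<dots> = - pairing (br (phi x) y) a"
    by (simp add: pairing_linmap[OF bilinear_map_right[OF bilinear], where y = y] sum_negf)
  finally show ?thesis .
qed

lemma pairing_adcd: "pairing (adcd a x) b = - pairing x (brd (phis a) b)"
proof -
  have "pairing (adcd a x) b = (\<Sum>j\<in>UNIV. b j * - pairing (brd (phis a) (unitv j)) x)"
    by (simp add: ad_circ_dual_def pairing_def[of _ b] pairing_commute[of x] mult.commute)
  also have "\<dots> = - pairing (brd (phis a) b) x"
    by (simp add: pairing_linmap[OF bilinear_map_right[OF bilinear_dual], where y = b] sum_negf)
  finally show ?thesis by (simp add: pairing_commute)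
qed

lemma adc_simps [simp]:
  "adc x (vadd a b) = vadd (adc x a) (adc x b)" "adc (vadd x y) a = vadd (adc x a) (adc y a)"
  "adc x (vsub a b) = vsub (adc x a) (adc x b)" "adc (vsub x y) a = vsub (adc x a) (adc y a)"
  "adc x (vneg a) = vneg (adc x a)" "adc (vneg x) a = vneg (adc x a)"
  "adc x (vsmul c a) = vsmul c (adc x a)" "adc (vsmul c x) a = vsmul c (adc x a)"
  "adc x vzero = vzero" "adc vzero a = vzero"
  by (rule pairing_ext_right; simp add: pairing_adc algebra_simps)+

lemma adcd_simps [simp]:
  "adcd a (vadd x y) = vadd (adcd a x) (adcd a y)" "adcd (vadd a b) x = vadd (adcd a x) (adcd b x)"
  "adcd a (vsub x y) = vsub (adcd a x) (adcd a y)" "adcd (vsub a b) x = vsub (adcd a x) (adcd b x)"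
  "adcd a (vneg x) = vneg (adcd a x)" "adcd (vneg a) x = vneg (adcd a x)"
  "adcd a (vsmul c x) = vsmul c (adcd a x)" "adcd (vsmul c a) x = vsmul c (adcd a x)"
  "adcd a vzero = vzero" "adcd vzero x = vzero"
  by (rule pairing_ext; simp add: pairing_adcd algebra_simps)+

lemma phis_adc: "phis (adc x a) = adc (phi x) (phis a)"
proof (rule pairing_ext_right, goal_cases)
  case (1 y)
  have "pairing y (phis (adc x a)) = - pairing (phi (br x y)) a"
    by (simp add: pairing_phi [symmetric] pairing_adc multiplicative)
  also have "\<dots> = pairing y (adc (phi x) (phis a))"
    by (simp add: pairing_adc weakly_involutive pairing_phi)
  finally show ?case .
qed

lemma phi_adcd: "phi (adcd a x) = adcd (phis a) (phi x)"
proof (rule pairing_ext, goal_cases)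
  case (1 b)
  have "pairing (phi (adcd a x)) b = - pairing (phi x) (brd a b)"
    by (simp add: pairing_phi pairing_adcd multiplicative_dual)
  also have "\<dots> = pairing (adcd (phis a) (phi x)) b"
    by (simp add: pairing_adcd weakly_involutive_dual)
  finally show ?case .
qed

lemma adc_phi_phi: "adc (phi (phi x)) a = adc x a"
  by (simp add: ad_circ_def weakly_involutive)

lemma adcd_phis_phis: "adcd (phis (phis a)) x = adcd a x"
  by (simp add: ad_circ_dual_def weakly_involutive_dual)

lemma adc_phis_phis: "adc x (phis (phis a)) = adc x a"
  by (rule pairing_ext_right)
    (simp add: pairing_adc pairing_phi [symmetric] multiplicative weakly_involutive weakly_involutive_right)

lemma adcd_phi_phi: "adcd a (phi (phi x)) = adcd a x"
  by (rule pairing_ext)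
    (simp add: pairing_adcd pairing_phi multiplicative_dual weakly_involutive_dual weakly_involutive_dual_right)

lemma phis_phis_adc: "phis (phis (adc x a)) = adc x a"
  by (simp add: phis_adc adc_phi_phi adc_phis_phis)

lemma phi_phi_adcd: "phi (phi (adcd a x)) = adcd a x"
  by (simp add: phi_adcd adcd_phis_phis adcd_phi_phi)

lemma adc_br: "adc (br x y) (phis c) = vsub (adc (phi x) (adc y c)) (adc (phi y) (adc x c))"
proof (rule pairing_ext_right, goal_cases)
  case (1 t)
  have "pairing t (adc (br x y) (phis c)) = pairing (br (phi t) (br x y)) c"
    by (simp add: pairing_adc pairing_phi [symmetric] multiplicative weakly_involutive
        weakly_involutive_right skew[of "br x y" "phi t"])
  also have "\<dots> = - pairing (br (phi x) (br y t)) c - pairing (br (phi y) (br t x)) c"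
    using arg_cong[OF jacobi[of t x y], of "\<lambda>v. pairing v c"]
    by (simp add: hom_jacobiator_def) algebra
  also have "\<dots> = pairing t (vsub (adc (phi x) (adc y c)) (adc (phi y) (adc x c)))"
    by (simp add: pairing_adc weakly_involutive skew[of t x])
  finally show ?case .
qed

lemma adcd_brd: "adcd (brd b c) (phi x) = vsub (adcd (phis b) (adcd c x)) (adcd (phis c) (adcd b x))"
proof (rule pairing_ext, goal_cases)
  case (1 d)
  have "pairing (adcd (brd b c) (phi x)) d = pairing x (brd (phis d) (brd b c))"
    by (simp add: pairing_adcd pairing_phi multiplicative_dual weakly_involutive_dual
        weakly_involutive_dual_right skew_dual[of "brd b c" "phis d"])
  also have "\<dots> = - pairing x (brd (phis b) (brd c d)) - pairing x (brd (phis c) (brd d b))"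
    using arg_cong[OF jacobi_dual[of d b c], of "pairing x"]
    by (simp add: hom_jacobiator_def) algebra
  also have "\<dots> = pairing (vsub (adcd (phis b) (adcd c x)) (adcd (phis c) (adcd b x))) d"
    by (simp add: pairing_adcd weakly_involutive_dual skew_dual[of b d])
  finally show ?case .
qed

lemma dual_map_br_phi: "dual_map (br (phi x)) a = vneg (adc x a)"
  by (simp add: dual_map_def ad_circ_def fun_eq_iff pairing_def mult.commute)

lemma pairing_br_brd:
  "pairing (br x y) (brd a b) =
     - pairing y (brd (adc x a) (phis b)) - pairing y (brd (phis a) (adc x b))
     + pairing x (brd (adc y a) (phis b)) + pairing x (brd (phis a) (adc y b))"
proof -
  have "pairing (br x y) (brd a b) = tensor_pairing (cobracket brd (br x y)) a b"
    by (simp add: tensor_pairing_cobracket[OF bilinear_dual])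
  then show ?thesis
    unfolding compatible tensor_pairing_tsub ad_tensor_def tensor_pairing_tadd
      tensor_pairing_tensor_map dual_map_br_phi tensor_pairing_cobracket[OF bilinear_dual]
    by simp
qed

lemma pairing_br_phi_adcd: "pairing (br (phi x) (adcd a y)) b = pairing y (brd (phis a) (adc x b))"
proof -
  have "pairing (br (phi x) (adcd a y)) b = - pairing (adcd a y) (adc x b)"
    by (simp add: pairing_adc)
  then show ?thesis
    by (simp add: pairing_adcd)
qed

lemma adcd_br:
  "adcd (phis c) (br x y) =
     vsub (vadd (br (phi x) (adcd c y)) (adcd (adc y c) (phi x)))
       (vadd (br (phi y) (adcd c x)) (adcd (adc x c) (phi y)))"
proof (rule pairing_ext, goal_cases)
  case (1 b)
  have "pairing (br (phi x) (adcd c y)) b = pairing y (brd (phis c) (adc x b))"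
    by (rule pairing_br_phi_adcd)
  moreover have "pairing (adcd (adc y c) (phi x)) b = - pairing x (brd (adc y c) (phis b))"
    by (simp add: pairing_adcd pairing_phi multiplicative_dual phis_phis_adc)
  moreover have "pairing (br (phi y) (adcd c x)) b = pairing x (brd (phis c) (adc y b))"
    by (rule pairing_br_phi_adcd)
  moreover have "pairing (adcd (adc x c) (phi y)) b = - pairing y (brd (adc x c) (phis b))"
    by (simp add: pairing_adcd pairing_phi multiplicative_dual phis_phis_adc)
  moreover have "pairing (adcd (phis c) (br x y)) b = - pairing (br x y) (brd c b)"
    by (simp add: pairing_adcd weakly_involutive_dual)
  ultimately show ?case
    using pairing_br_brd[of x y c b] by (simp add: skew_dual[of "adc _ c"] algebra_simps)
qed

lemma adc_brd:
  "adc (phi x) (brd b c) =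
     vsub (vadd (adc (adcd c x) (phis b)) (brd (phis b) (adc x c)))
       (vadd (adc (adcd b x) (phis c)) (brd (phis c) (adc x b)))"
proof (rule pairing_ext_right, goal_cases)
  case (1 y)
  have "pairing y (adc (phi x) (brd b c)) = - pairing (br x y) (brd b c)"
    by (simp add: pairing_adc weakly_involutive)
  moreover have "pairing y (adc (adcd c x) (phis b)) = pairing x (brd (phis c) (adc y b))"
    by (simp add: pairing_adc pairing_phi [symmetric] multiplicative phi_phi_adcd
        skew[of "adcd c x"] pairing_br_phi_adcd [symmetric])
  moreover have "pairing y (adc (adcd b x) (phis c)) = pairing x (brd (phis b) (adc y c))"
    by (simp add: pairing_adc pairing_phi [symmetric] multiplicative phi_phi_adcd
        skew[of "adcd b x"] pairing_br_phi_adcd [symmetric])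
  ultimately show ?case
    using pairing_br_brd[of x y b c]
    by (simp add: skew_dual[of "adc _ b" "phis c"] skew_dual[of "adc _ c" "phis b"] algebra_simps)
qed

abbreviation "db \<equiv> double_bracket br phi brd"
abbreviation "dp \<equiv> double_phi phi"

lemma double_bracket_dsum [simp]:
  "db (dsum x a) (dsum y b) =
     dsum (vsub (vadd (br x y) (adcd a y)) (adcd b x)) (vadd (vsub (adc x b) (adc y a)) (brd a b))"
  by (simp add: double_bracket_def Let_def)

lemma double_phi_dsum [simp]: "dp (dsum x a) = dsum (phi x) (phis a)"
  by (simp add: double_phi_def)

lemma double_bracket_skew: "db u v = vneg (db v u)"
proof -
  have "db (dsum x a) (dsum y b) = vneg (db (dsum y b) (dsum x a))" for x a y b
    by (simp add: dsum_eq_iff skew[of x] skew_dual[of a]) (simp add: fun_eq_iff)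
  then show ?thesis
    by (metis dsum_gpart_dpart)
qed

lemma double_bracket_vadd_left: "db (vadd u u') v = vadd (db u v) (db u' v)"
proof -
  have "db (vadd (dsum x a) (dsum x' a')) (dsum y b) =
      vadd (db (dsum x a) (dsum y b)) (db (dsum x' a') (dsum y b))" for x a x' a' y b
    by (simp add: dsum_eq_iff) (simp add: fun_eq_iff algebra_simps)
  then show ?thesis
    by (metis dsum_gpart_dpart)
qed

lemma double_bracket_vsmul_left: "db (vsmul c u) v = vsmul c (db u v)"
proof -
  have "db (vsmul c (dsum x a)) (dsum y b) = vsmul c (db (dsum x a) (dsum y b))" for x a y b
    by (simp add: dsum_eq_iff) (simp add: fun_eq_iff algebra_simps)
  then show ?thesis
    by (metis dsum_gpart_dpart)
qed

lemma double_bracket_bilinear: "bilinear_map db"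
proof -
  have "db u (vadd v v') = vadd (db u v) (db u v')" for u v v'
    by (subst (1 2 3) double_bracket_skew[of u]) (simp add: double_bracket_vadd_left fun_eq_iff)
  moreover have "db u (vsmul c v) = vsmul c (db u v)" for u c v
    by (subst (1 2) double_bracket_skew[of u]) (simp add: double_bracket_vsmul_left fun_eq_iff)
  ultimately show ?thesis
    by (simp add: bilinear_map_def linmap_def double_bracket_vadd_left double_bracket_vsmul_left)
qed

lemma double_phi_linmap: "linmap dp"
  by (simp add: linmap_def double_phi_def)

lemma double_phi_multiplicative: "dp (db u v) = db (dp u) (dp v)"
proof -
  have "dp (db (dsum x a) (dsum y b)) = db (dp (dsum x a)) (dp (dsum y b))" for x a y b
    by (simp add: multiplicative multiplicative_dual phis_adc phi_adcd)
  then show ?thesis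
    by (metis dsum_gpart_dpart)
qed

lemma double_weakly_involutive: "weakly_involutive db dp"
proof -
  have "db (dp (dp (dsum x a))) (dsum y b) = db (dsum x a) (dsum y b)" for x a y b
    by (simp add: weakly_involutive weakly_involutive_dual adc_phi_phi adc_phis_phis
        adcd_phis_phis adcd_phi_phi)
  then show ?thesis
    unfolding weakly_involutive_def by (metis dsum_gpart_dpart)
qed

lemma double_jacobiator_ggd: "hom_jacobiator db dp (dsum x vzero) (dsum y vzero) (dsum vzero c) = vzero"
  using adcd_br[of c x y] adc_br[of x y c]
  by (simp add: hom_jacobiator_def) (simp add: fun_eq_iff algebra_simps)

lemma double_jacobiator_gdd: "hom_jacobiator db dp (dsum x vzero) (dsum vzero b) (dsum vzero c) = vzero"
  using adcd_brd[of b c x] adc_brd[of x b c]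
  by (simp add: hom_jacobiator_def) (simp add: fun_eq_iff algebra_simps)

lemma double_hom_lie_algebra: "hom_lie_algebra db dp"
proof -
  have "hom_jacobiator db dp u v w = vzero" for u v w
  proof (rule triadditive_cyclic_dsum_vanishes[where J = "hom_jacobiator db dp"])
    show "hom_jacobiator db dp (vadd u u') v w =
        vadd (hom_jacobiator db dp u v w) (hom_jacobiator db dp u' v w)" for u u' v w
      by (rule hom_jacobiator_vadd_left[OF double_bracket_bilinear double_phi_linmap])
    show "hom_jacobiator db dp (dsum x vzero) (dsum y vzero) (dsum z vzero) = vzero" for x y z
      using jacobi[of x y z] by (simp add: hom_jacobiator_def)
    show "hom_jacobiator db dp (dsum vzero a) (dsum vzero b) (dsum vzero c) = vzero" for a b c
      using jacobi_dual[of a b c] by (simp add: hom_jacobiator_def)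
  qed (rule hom_jacobiator_cyclic double_jacobiator_ggd double_jacobiator_gdd)+
  then show ?thesis
    unfolding hom_lie_algebra_iff_hom_jacobiator
    using double_bracket_bilinear double_bracket_skew double_phi_linmap double_phi_multiplicative
    by blast
qed

end

theorem corollary3p10:
  fixes br :: "('n::finite \<Rightarrow> 'k::field) \<Rightarrow> ('n \<Rightarrow> 'k) \<Rightarrow> ('n \<Rightarrow> 'k)"
    and phi :: "('n \<Rightarrow> 'k) \<Rightarrow> ('n \<Rightarrow> 'k)"
    and brd :: "('n \<Rightarrow> 'k) \<Rightarrow> ('n \<Rightarrow> 'k) \<Rightarrow> ('n \<Rightarrow> 'k)"
  assumes "hom_lie_bialgebra br phi brd"
  shows "hom_lie_algebra (double_bracket br phi brd) (double_phi phi)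
       \<and> weakly_involutive (double_bracket br phi brd) (double_phi phi)"
proof -
  interpret hom_lie_bialg br phi brd
    by (rule hom_lie_bialg.intro) (fact assms)
  show ?thesis
    using double_hom_lie_algebra double_weakly_involutive by blast
qed

end
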